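(* Let $\mathcal A=(a_{ij})$, $\mathcal B=(b_{ij})$ be symmetric $3\times3$ matrices (indices $0,1,2$), $\mathbf V(s,t)=(s^2,st,t^2)^T$, $\mathbf f(u)=(\mathcal A\mathbf V(u,1))\times(\mathcal B\mathbf V(u,1))$, and consider the symmetric QRT map $u_{n+1}=\frac{f^{(1)}(u_n)-u_{n-1}f^{(2)}(u_n)}{f^{(2)}(u_n)-u_{n-1}f^{(3)}(u_n)}$ with first integral $$J=\frac{\mathbf V(u_{n-1},1)^T\mathcal A\,\mathbf V(u_n,1)}{\mathbf V(u_{n-1},1)^T\mathcal B\,\mathbf V(u_n,1)}.$$ Write $u_n=p_n/q_n$ where $p_n,q_n$ satisfy $$p_{n+1}=\frac{q_{n-1}F^{(1)}_n-p_{n-1}F^{(2)}_n}{D_n},\qquad q_{n+1}=\frac{q_{n-1}F^{(2)}_n-p_{n-1}F^{(3)}_n}{D_n},$$ with $F^{(i)}_n=q_n^4f^{(i)}(p_n/q_n)$ and $D_n=\mathbf V(p_{n-1},q_{n-1})^T\mathcal B\,\mathbf V(p_n,q_n)$. Set $$a_1=a_{00}-Jb_{00},\ a_2=a_{01}-Jb_{01},\ a_3=a_{02}-Jb_{02},\ a_5=a_{12}-Jb_{12},\ a_6=a_{22}-Jb_{22},\ I=-a_{11}+Jb_{11},$$ $$\alpha=a_2a_5+a_3^2-a_1a_6+a_3I,\quad \beta=(a_1a_5-2a_2a_3)a_5+a_2^2a_6+(a_1a_6-a_3^2)I,\quad \gamma=4a_3+I,$$ and $A=-(\alpha^3+\alpha\beta\gamma+\beta^2)$,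 $B=(\beta^2-A)\alpha^2$, $C=A(A-\beta^2)$. Then $x_n=p_n$ and $x_n=q_n$ both satisfy $$x_{n+7}x_n=Ax_{n+6}x_{n+1}+Bx_{n+5}x_{n+2}+Cx_{n+4}x_{n+3}.$$
   Context: The superscripts in $f^{(i)},F^{(i)}_n$ denote the components of the vectors $\mathbf f$ and $\mathbf F_n$ (cross product of vectors in three dimensions). *)

theory Defs
  imports "HOL-Analysis.Analysis" "HOL-Analysis.Cross3"
begin

text \<open>Paper indices 0,1,2 of vectors/matrices correspond to the indices 1,2,3 of the
  type real^3 (so a_ij = A $ (i+1) $ (j+1), f^(k) = f $ k).\<close>

definition Vq :: "real \<Rightarrow> real \<Rightarrow> real^3" where
  "Vq s t = vector [s^2, s*t, t^2]"

definition fq :: "real^3^3 \<Rightarrow> real^3^3 \<Rightarrow> real \<Rightarrow> real^3" where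
  "fq A B u = cross3 (A *v Vq u 1) (B *v Vq u 1)"

definition Fq :: "real^3^3 \<Rightarrow> real^3^3 \<Rightarrow> real \<Rightarrow> real \<Rightarrow> real^3" where
  "Fq A B p q = (q^4) *\<^sub>R fq A B (p / q)"

definition bq :: "real^3^3 \<Rightarrow> real \<Rightarrow> real \<Rightarrow> real \<Rightarrow> real \<Rightarrow> real" where
  "bq M s t s' t' = Vq s t \<bullet> (M *v Vq s' t')"

definition qa1 :: "real^3^3 \<Rightarrow> real^3^3 \<Rightarrow> real \<Rightarrow> real" where
  "qa1 A B J = A$1$1 - J * B$1$1"
definition qa2 :: "real^3^3 \<Rightarrow> real^3^3 \<Rightarrow> real \<Rightarrow> real" where
  "qa2 A B J = A$1$2 - J * B$1$2"
definition qa3 :: "real^3^3 \<Rightarrow> real^3^3 \<Rightarrow> real \<Rightarrow> real" where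
  "qa3 A B J = A$1$3 - J * B$1$3"
definition qa5 :: "real^3^3 \<Rightarrow> real^3^3 \<Rightarrow> real \<Rightarrow> real" where
  "qa5 A B J = A$2$3 - J * B$2$3"
definition qa6 :: "real^3^3 \<Rightarrow> real^3^3 \<Rightarrow> real \<Rightarrow> real" where
  "qa6 A B J = A$3$3 - J * B$3$3"
definition qI :: "real^3^3 \<Rightarrow> real^3^3 \<Rightarrow> real \<Rightarrow> real" where
  "qI A B J = - A$2$2 + J * B$2$2"

definition qalpha :: "real^3^3 \<Rightarrow> real^3^3 \<Rightarrow> real \<Rightarrow> real" where
  "qalpha A B J = qa2 A B J * qa5 A B J + (qa3 A B J)^2 - qa1 A B J * qa6 A B J
                   + qa3 A B J * qI A B J"
definition qbeta :: "real^3^3 \<Rightarrow> real^3^3 \<Rightarrow> real \<Rightarrow> real" where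
  "qbeta A B J = (qa1 A B J * qa5 A B J - 2 * qa2 A B J * qa3 A B J) * qa5 A B J
                  + (qa2 A B J)^2 * qa6 A B J
                  + (qa1 A B J * qa6 A B J - (qa3 A B J)^2) * qI A B J"
definition qgamma :: "real^3^3 \<Rightarrow> real^3^3 \<Rightarrow> real \<Rightarrow> real" where
  "qgamma A B J = 4 * qa3 A B J + qI A B J"

definition cA :: "real^3^3 \<Rightarrow> real^3^3 \<Rightarrow> real \<Rightarrow> real" where
  "cA A B J = - ((qalpha A B J)^3 + qalpha A B J * qbeta A B J * qgamma A B J + (qbeta A B J)^2)"
definition cB :: "real^3^3 \<Rightarrow> real^3^3 \<Rightarrow> real \<Rightarrow> real" where
  "cB A B J = ((qbeta A B J)^2 - cA A B J) * (qalpha A B J)^2"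
definition cC :: "real^3^3 \<Rightarrow> real^3^3 \<Rightarrow> real \<Rightarrow> real" where
  "cC A B J = cA A B J * (cA A B J - (qbeta A B J)^2)"

end

theory Submission
  imports Defs
begin

text \<open>Since J is a first integral, the points (p(n-1) : q(n-1)) and
  (p(n+1) : q(n+1)) are the two roots of the binary quadratic form
  V(X,Y)^T (\<A> - J\<B>) V(p n, q n), and the chosen normalisation of the
  recursion turns Vieta's formulas into three polynomial three-term relations between
  consecutive (p, q). These relations are covariant under gauge changes
  (p n, q n) \<mapsto> c r^n (p n, q n) and under translations
  p \<mapsto> p + t q; the latter change the coefficients a_i, I but not
  \<alpha>, \<beta>, \<gamma>. Normalising a window to p 3 = 0, q 3 = q 4 = 1, all
  eight terms become rational functions of p 4 and the coefficients, with denominators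
  only q 2 and q 5, and the Somos-7 relation becomes a polynomial identity.\<close>

definition quad :: "real \<Rightarrow> real \<Rightarrow> real \<Rightarrow> real \<Rightarrow> real \<Rightarrow> real" where
  "quad a b c x y = a*x^2 + b*x*y + c*y^2"

lemma Vq_components [simp]: "Vq s t $ 1 = s^2" "Vq s t $ 2 = s*t" "Vq s t $ 3 = t^2"
  by (simp_all add: Vq_def)

lemma Vq_scale: "Vq (s / t) 1 = (1 / t^2) *\<^sub>R Vq s t" if "t \<noteq> 0"
  using that by (simp add: vec_eq_iff forall_3 power2_eq_square field_simps)

lemma Fq_eq_cross3:
  assumes "q \<noteq> 0"
  shows "Fq A B p q = cross3 ((A - J *\<^sub>R B) *v Vq p q) (B *v Vq p q)"
proof -
  have "A *v Vq p q = (A - J *\<^sub>R B) *v Vq p q + J *\<^sub>R (B *v Vq p q)"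
    by (simp add: matrix_vector_mult_diff_rdistrib scaleR_matrix_vector_assoc)
  then show ?thesis
    using assms by (simp add: Fq_def fq_def Vq_scale matrix_vector_mult_scaleR cross_add_left
        cross_mult_left cross_mult_right)
qed

lemma bq_pencil: "bq A s t s' t' - J * bq B s t s' t' = Vq s t \<bullet> ((A - J *\<^sub>R B) *v Vq s' t')"
  by (simp add: bq_def matrix_vector_mult_diff_rdistrib inner_diff_right
      flip: scaleR_matrix_vector_assoc)

lemma pencil_Vq_components:
  fixes A B :: "real^3^3"
  assumes "transpose A = A" and "transpose B = B"
  shows "((A - J *\<^sub>R B) *v Vq x y) $ 1 = quad (qa1 A B J) (qa2 A B J) (qa3 A B J) x y"
    and "((A - J *\<^sub>R B) *v Vq x y) $ 2 = quad (qa2 A B J) (- qI A B J) (qa5 A B J) x y"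
    and "((A - J *\<^sub>R B) *v Vq x y) $ 3 = quad (qa3 A B J) (qa5 A B J) (qa6 A B J) x y"
proof -
  have "M$i$j = M$j$i" if "transpose M = M" for M :: "real^3^3" and i j
    using arg_cong[OF that, of "\<lambda>M. M$j$i"] by (simp add: transpose_def)
  then have "A$2$1 = A$1$2" "A$3$1 = A$1$3" "A$3$2 = A$2$3"
    "B$2$1 = B$1$2" "B$3$1 = B$1$3" "B$3$2 = B$2$3"
    using assms by blast+
  then show "((A - J *\<^sub>R B) *v Vq x y) $ 1 = quad (qa1 A B J) (qa2 A B J) (qa3 A B J) x y"
    and "((A - J *\<^sub>R B) *v Vq x y) $ 2 = quad (qa2 A B J) (- qI A B J) (qa5 A B J) x y"
    and "((A - J *\<^sub>R B) *v Vq x y) $ 3 = quad (qa3 A B J) (qa5 A B J) (qa6 A B J) x y"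
    by (simp_all add: matrix_vector_mult_def sum_3 quad_def qa1_def qa2_def qa3_def qa5_def
        qa6_def qI_def algebra_simps power2_eq_square)
qed

lemma inner_matrix_symmetric:
  fixes M :: "real^'n^'n"
  assumes "transpose M = M"
  shows "u \<bullet> (M *v v) = v \<bullet> (M *v u)"
  by (metis assms dot_lmul_matrix inner_commute transpose_matrix_vector)

lemma vieta_of_cross3:
  fixes c d :: "real^3"
  assumes root: "Vq x y \<bullet> c = 0" and D: "Vq x y \<bullet> d \<noteq> 0"
    and x': "x' = (y * cross3 c d $ 1 - x * cross3 c d $ 2) / (Vq x y \<bullet> d)"
    and y': "y' = (y * cross3 c d $ 2 - x * cross3 c d $ 3) / (Vq x y \<bullet> d)"
  shows "y' * y = - c$1" "x * y' + y * x' = c$2" "x' * x = - c$3"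
proof -
  define r where "r = x^2 * c$1 + x*y * c$2 + y^2 * c$3"
  have r: "r = 0"
    using root by (simp add: r_def inner_vec_def sum_3)
  have D_eq: "Vq x y \<bullet> d = x^2 * d$1 + x*y * d$2 + y^2 * d$3"
    by (simp add: inner_vec_def sum_3)
  have xD: "x' * (Vq x y \<bullet> d) = y * (c$2 * d$3 - c$3 * d$2) - x * (c$3 * d$1 - c$1 * d$3)"
    using D by (simp add: x' cross3_def)
  have yD: "y' * (Vq x y \<bullet> d) = y * (c$3 * d$1 - c$1 * d$3) - x * (c$1 * d$2 - c$2 * d$1)"
    using D by (simp add: y' cross3_def)
  have "(Vq x y \<bullet> d) * (y' * y + c$1) = d$1 * r"
    using yD unfolding D_eq r_def by algebra
  then show "y' * y = - c$1" using D r by simp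
  have "(Vq x y \<bullet> d) * (x * y' + y * x' - c$2) = - d$2 * r"
    using xD yD unfolding D_eq r_def by algebra
  then show "x * y' + y * x' = c$2" using D r by simp
  have "(Vq x y \<bullet> d) * (x' * x + c$3) = d$3 * r"
    using xD unfolding D_eq r_def by algebra
  then show "x' * x = - c$3" using D r by simp
qed

lemma qrt_step:
  fixes A B :: "real^3^3"
  assumes symA: "transpose A = A" and symB: "transpose B = B"
    and y1: "y1 \<noteq> 0" and D: "bq B x y x1 y1 \<noteq> 0"
    and x2: "x2 = (y * Fq A B x1 y1 $ 1 - x * Fq A B x1 y1 $ 2) / bq B x y x1 y1"
    and y2: "y2 = (y * Fq A B x1 y1 $ 2 - x * Fq A B x1 y1 $ 3) / bq B x y x1 y1"
    and J: "bq A x y x1 y1 = J * bq B x y x1 y1"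
  shows "y2 * y = - quad (qa1 A B J) (qa2 A B J) (qa3 A B J) x1 y1"
    and "x * y2 + y * x2 = quad (qa2 A B J) (- qI A B J) (qa5 A B J) x1 y1"
    and "x2 * x = - quad (qa3 A B J) (qa5 A B J) (qa6 A B J) x1 y1"
    and "bq A x1 y1 x2 y2 = J * bq B x1 y1 x2 y2"
proof -
  define c where "c = (A - J *\<^sub>R B) *v Vq x1 y1"
  define d where "d = B *v Vq x1 y1"
  have root: "Vq x y \<bullet> c = 0"
    using bq_pencil[of A x y x1 y1 J B] J by (simp add: c_def)
  have F: "Fq A B x1 y1 = cross3 c d"
    by (simp add: Fq_eq_cross3[OF y1] c_def d_def)
  have Dd: "bq B x y x1 y1 = Vq x y \<bullet> d"
    by (simp add: bq_def d_def)
  note vieta = vieta_of_cross3[OF root D[unfolded Dd] x2[unfolded F Dd] y2[unfolded F Dd]]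
  note c = pencil_Vq_components[OF symA symB, of J x1 y1, folded c_def]
  show "y2 * y = - quad (qa1 A B J) (qa2 A B J) (qa3 A B J) x1 y1"
    and "x * y2 + y * x2 = quad (qa2 A B J) (- qI A B J) (qa5 A B J) x1 y1"
    and "x2 * x = - quad (qa3 A B J) (qa5 A B J) (qa6 A B J) x1 y1"
    using vieta by (simp_all add: c)
  have "transpose (A - J *\<^sub>R B) = A - J *\<^sub>R B"
    using symA symB by (simp add: transpose_def vec_eq_iff)
  then have "bq A x1 y1 x2 y2 - J * bq B x1 y1 x2 y2 = Vq x2 y2 \<bullet> c"
    unfolding bq_pencil c_def by (rule inner_matrix_symmetric)
  also have "\<dots> = x2^2 * c$1 + (x2*y2) * c$2 + y2^2 * c$3"
    by (simp add: inner_vec_def sum_3)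
  also have "\<dots> = 0"
  proof -
    have "c$1 = - (y2 * y)" "c$2 = x * y2 + y * x2" "c$3 = - (x2 * x)"
      using vieta by linarith+
    then show ?thesis by (simp add: power2_eq_square algebra_simps)
  qed
  finally show "bq A x1 y1 x2 y2 = J * bq B x1 y1 x2 y2" by simp
qed

text \<open>(p k : q k) and (p (k+2) : q (k+2)) are the roots of the binary form
  V(X,Y)^T M V(p (k+1), q (k+1)), where M is the symmetric matrix with upper triangle
  a1, a2, a3, -I, a5, a6, as for M = \<A> - J\<B> in the paper.\<close>

definition qrt_vieta ::
    "real \<Rightarrow> real \<Rightarrow> real \<Rightarrow> real \<Rightarrow> real \<Rightarrow> real \<Rightarrow> (nat \<Rightarrow> real) \<Rightarrow> (nat \<Rightarrow> real) \<Rightarrow> nat \<Rightarrow> bool" where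
  "qrt_vieta a1 a2 a3 I a5 a6 p q k \<longleftrightarrow>
     q (k+2) * q k = - quad a1 a2 a3 (p (k+1)) (q (k+1)) \<and>
     p k * q (k+2) + q k * p (k+2) = quad a2 (- I) a5 (p (k+1)) (q (k+1)) \<and>
     p (k+2) * p k = - quad a3 a5 a6 (p (k+1)) (q (k+1))"

lemma qrt_vieta_shift:
  "qrt_vieta a1 a2 a3 I a5 a6 (\<lambda>k. p (n+k)) (\<lambda>k. q (n+k)) k = qrt_vieta a1 a2 a3 I a5 a6 p q (n+k)"
  by (simp add: qrt_vieta_def add.assoc)

lemma quad_scale: "quad a b c (g * x) (g * y) = g^2 * quad a b c x y"
  by (simp add: quad_def power2_eq_square algebra_simps)

lemma qrt_vieta_gauge:
  assumes "qrt_vieta a1 a2 a3 I a5 a6 (\<lambda>k. c * r^k * p k) (\<lambda>k. c * r^k * q k) k"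
    and "c \<noteq> 0" "r \<noteq> 0"
  shows "qrt_vieta a1 a2 a3 I a5 a6 p q k"
proof -
  define G where "G = (c * r^(k+1))^2"
  have G: "G \<noteq> 0" using assms(2,3) by (simp add: G_def)
  have prod: "c * r^(k+2) * x * (c * r^k * y) = G * (x * y)"
    "c * r^k * x * (c * r^(k+2) * y) = G * (x * y)" for x y
    by (simp_all add: G_def power_add power2_eq_square)
  from assms(1) show ?thesis
    unfolding qrt_vieta_def quad_scale prod G_def[symmetric] distrib_left[symmetric]
      minus_mult_right mult_left_cancel[OF G] .
qed

text \<open>The new coefficients are those of V(X + tY, Y)^T M V(X' + tY', Y').\<close>

lemma qrt_vieta_translate:
  assumes "qrt_vieta a1 a2 a3 I a5 a6 (\<lambda>k. p k + t * q k) q k"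
  shows "qrt_vieta a1 (a2 + 2*t*a1) (a1*t^2 + a2*t + a3) (I - 4*t*a2 - 4*t^2*a1)
           (2*a1*t^3 + 3*a2*t^2 + (2*a3 - I)*t + a5)
           (a1*t^4 + 2*a2*t^3 + (2*a3 - I)*t^2 + 2*a5*t + a6) p q k"
proof -
  from assms have h1: "q (k+2) * q k = - quad a1 a2 a3 (p (k+1) + t * q (k+1)) (q (k+1))"
    and h2: "(p k + t * q k) * q (k+2) + q k * (p (k+2) + t * q (k+2))
               = quad a2 (- I) a5 (p (k+1) + t * q (k+1)) (q (k+1))"
    and h3: "(p (k+2) + t * q (k+2)) * (p k + t * q k)
               = - quad a3 a5 a6 (p (k+1) + t * q (k+1)) (q (k+1))"
    unfolding qrt_vieta_def by simp_all
  show ?thesis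
    unfolding qrt_vieta_def
  proof (intro conjI)
    show "q (k+2) * q k = - quad a1 (a2 + 2*t*a1) (a1*t^2 + a2*t + a3) (p (k+1)) (q (k+1))"
      using h1 unfolding quad_def by algebra
    show "p k * q (k+2) + q k * p (k+2) = quad (a2 + 2*t*a1) (- (I - 4*t*a2 - 4*t^2*a1))
            (2*a1*t^3 + 3*a2*t^2 + (2*a3 - I)*t + a5) (p (k+1)) (q (k+1))"
      using h1 h2 unfolding quad_def by algebra
    show "p (k+2) * p k = - quad (a1*t^2 + a2*t + a3) (2*a1*t^3 + 3*a2*t^2 + (2*a3 - I)*t + a5)
            (a1*t^4 + 2*a2*t^3 + (2*a3 - I)*t^2 + 2*a5*t + a6) (p (k+1)) (q (k+1))"
      using h1 h2 h3 unfolding quad_def by algebra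
  qed
qed

definition qrt_alpha :: "real \<Rightarrow> real \<Rightarrow> real \<Rightarrow> real \<Rightarrow> real \<Rightarrow> real \<Rightarrow> real" where
  "qrt_alpha a1 a2 a3 I a5 a6 = a2*a5 + a3^2 - a1*a6 + a3*I"

definition qrt_beta :: "real \<Rightarrow> real \<Rightarrow> real \<Rightarrow> real \<Rightarrow> real \<Rightarrow> real \<Rightarrow> real" where
  "qrt_beta a1 a2 a3 I a5 a6 = (a1*a5 - 2*a2*a3)*a5 + a2^2*a6 + (a1*a6 - a3^2)*I"

definition qrt_gamma :: "real \<Rightarrow> real \<Rightarrow> real" where
  "qrt_gamma a3 I = 4*a3 + I"

lemma qrt_invariants_translate:
  "qrt_alpha a1 (a2 + 2*t*a1) (a1*t^2 + a2*t + a3) (I - 4*t*a2 - 4*t^2*a1)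
     (2*a1*t^3 + 3*a2*t^2 + (2*a3 - I)*t + a5) (a1*t^4 + 2*a2*t^3 + (2*a3 - I)*t^2 + 2*a5*t + a6)
   = qrt_alpha a1 a2 a3 I a5 a6"
  "qrt_beta a1 (a2 + 2*t*a1) (a1*t^2 + a2*t + a3) (I - 4*t*a2 - 4*t^2*a1)
     (2*a1*t^3 + 3*a2*t^2 + (2*a3 - I)*t + a5) (a1*t^4 + 2*a2*t^3 + (2*a3 - I)*t^2 + 2*a5*t + a6)
   = qrt_beta a1 a2 a3 I a5 a6"
  "qrt_gamma (a1*t^2 + a2*t + a3) (I - 4*t*a2 - 4*t^2*a1) = qrt_gamma a3 I"
  unfolding qrt_alpha_def qrt_beta_def qrt_gamma_def by algebra+

text \<open>The Somos-7 relation with the paper's coefficients A, B, C in terms of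
  \<alpha>, \<beta>, \<gamma>, polarised so that it can be transported along
  p = c r^k (P + t Q).\<close>

definition somos7_defect :: "real \<Rightarrow> real \<Rightarrow> real \<Rightarrow> (nat \<Rightarrow> real) \<Rightarrow> (nat \<Rightarrow> real) \<Rightarrow> real" where
  "somos7_defect \<alpha> \<beta> \<gamma> x y =
     (let A = - (\<alpha>^3 + \<alpha>*\<beta>*\<gamma> + \<beta>^2); B = (\<beta>^2 - A) * \<alpha>^2; C = A * (A - \<beta>^2) in
      x 7 * y 0 + y 7 * x 0 - A * (x 6 * y 1 + y 6 * x 1) - B * (x 5 * y 2 + y 5 * x 2)
        - C * (x 4 * y 3 + y 4 * x 3))"

lemma somos7_defect_commute: "somos7_defect \<alpha> \<beta> \<gamma> x y = somos7_defect \<alpha> \<beta> \<gamma> y x"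
  by (simp add: somos7_defect_def Let_def algebra_simps)

lemma somos7_defect_add_left:
  "somos7_defect \<alpha> \<beta> \<gamma> (\<lambda>k. x k + t * y k) z
     = somos7_defect \<alpha> \<beta> \<gamma> x z + t * somos7_defect \<alpha> \<beta> \<gamma> y z"
  by (simp add: somos7_defect_def Let_def algebra_simps)

lemma somos7_defect_add_right:
  "somos7_defect \<alpha> \<beta> \<gamma> x (\<lambda>k. y k + t * z k)
     = somos7_defect \<alpha> \<beta> \<gamma> x y + t * somos7_defect \<alpha> \<beta> \<gamma> x z"
  by (simp add: somos7_defect_def Let_def algebra_simps)

lemma somos7_defect_geometric:
  "somos7_defect \<alpha> \<beta> \<gamma> (\<lambda>k. c * r^k * x k) (\<lambda>k. c * r^k * y k)
     = c^2 * r^7 * somos7_defect \<alpha> \<beta> \<gamma> x y"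
  unfolding somos7_defect_def Let_def by algebra

lemma somos7_of_vieta_normalized:
  fixes P Q :: "nat \<Rightarrow> real" and a1 a2 a3 I a5 a6 :: real
  defines "S \<equiv> somos7_defect (qrt_alpha a1 a2 a3 I a5 a6) (qrt_beta a1 a2 a3 I a5 a6) (qrt_gamma a3 I)"
  assumes V: "\<And>k. k < 6 \<Longrightarrow> qrt_vieta a1 a2 a3 I a5 a6 P Q k"
    and P3: "P 3 = 0" and Q3: "Q 3 = 1" and Q4: "Q 4 = 1"
    and Q2_nz: "Q 2 \<noteq> 0" and Q5_nz: "Q 5 \<noteq> 0"
  shows "S P P = 0" "S P Q = 0" "S Q Q = 0"
proof -
  define Q1 where "Q1 = quad a1 a2 a3"
  define Q2 where "Q2 = quad a2 (- I) a5"
  have V': "Q (k+2) * Q k = - Q1 (P (k+1)) (Q (k+1))"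
    "P k * Q (k+2) + Q k * P (k+2) = Q2 (P (k+1)) (Q (k+1))"
    "P (k+2) * P k = - quad a3 a5 a6 (P (k+1)) (Q (k+1))" if "k < 6" for k
    using V[OF that] unfolding qrt_vieta_def Q1_def Q2_def by simp_all
  have v3: "Q 5 * Q 3 = - Q1 (P 4) (Q 4)" "P 3 * Q 5 + Q 3 * P 5 = Q2 (P 4) (Q 4)"
      "P 5 * P 3 = - quad a3 a5 a6 (P 4) (Q 4)"
    and v2: "Q 4 * Q 2 = - Q1 (P 3) (Q 3)" "P 2 * Q 4 + Q 2 * P 4 = Q2 (P 3) (Q 3)"
    and v1: "Q 3 * Q 1 = - Q1 (P 2) (Q 2)" "P 1 * Q 3 + Q 1 * P 3 = Q2 (P 2) (Q 2)"
    and v4: "Q 6 * Q 4 = - Q1 (P 5) (Q 5)" "P 4 * Q 6 + Q 4 * P 6 = Q2 (P 5) (Q 5)"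
    and v0: "Q 2 * Q 0 = - Q1 (P 1) (Q 1)" "P 0 * Q 2 + Q 0 * P 2 = Q2 (P 1) (Q 1)"
    and v5: "Q 7 * Q 5 = - Q1 (P 6) (Q 6)" "P 5 * Q 7 + Q 5 * P 7 = Q2 (P 6) (Q 6)"
    using V'[of 3] V'[of 2] V'[of 1] V'[of 4] V'[of 0] V'[of 5] by (simp_all add: numeral_eq_Suc)
  have a6: "a6 = - a3 * P 4^2 - a5 * P 4"
    using v3(3) P3 Q4 by (simp add: quad_def)
  have q5: "Q 5 = - Q1 (P 4) 1" and p5: "P 5 = Q2 (P 4) 1"
    using v3(1,2) P3 Q3 Q4 by simp_all
  have q2: "Q 2 = - a3" and p2: "P 2 = a5 + a3 * P 4"
    using v2 P3 Q3 Q4 by (simp_all add: Q1_def Q2_def quad_def algebra_simps)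
  have q1: "Q 1 = - Q1 (P 2) (Q 2)" and p1: "P 1 = Q2 (P 2) (Q 2)"
    using v1 P3 Q3 by simp_all
  have q6: "Q 6 = - Q1 (P 5) (Q 5)" and p6: "P 6 = Q2 (P 5) (Q 5) - P 4 * Q 6"
    using v4 Q4 by (simp_all add: algebra_simps)
  have q0: "Q 2^2 * Q 0 = - Q 2 * Q1 (P 1) (Q 1)"
    and p0: "Q 2^2 * P 0 = Q 2 * Q2 (P 1) (Q 1) + P 2 * Q1 (P 1) (Q 1)"
    using v0 by algebra+
  have q7: "Q 5^2 * Q 7 = - Q 5 * Q1 (P 6) (Q 6)"
    and p7: "Q 5^2 * P 7 = Q 5 * Q2 (P 6) (Q 6) + P 5 * Q1 (P 6) (Q 6)"
    using v5 by algebra+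
  have scaled: "Q 2^2 * Q 5^2 * S X Y = (Q 5^2 * X 7) * (Q 2^2 * Y 0) + (Q 5^2 * Y 7) * (Q 2^2 * X 0)
      + Q 2^2 * Q 5^2 * (S X Y - (X 7 * Y 0 + Y 7 * X 0))" for X Y
    by (simp add: algebra_simps power2_eq_square)
  \<comment> \<open>The unit laws are needed: \<open>algebra\<close> fails on unsimplified literals such as \<open>1^2\<close>.\<close>
  note expand = q1 p1 q2 p2 P3 Q3 Q4 q5 p5 q6 p6 a6 S_def somos7_defect_def Let_def Q1_def Q2_def
    quad_def qrt_alpha_def qrt_beta_def qrt_gamma_def power_one mult_1_left mult_1_right
  have "Q 2^2 * Q 5^2 * S P P = 0"
    unfolding scaled p0 p7 unfolding expand by algebra
  then show "S P P = 0" using Q2_nz Q5_nz by simp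
  have "Q 2^2 * Q 5^2 * S P Q = 0"
    unfolding scaled p0 p7 q0 q7 unfolding expand by algebra
  then show "S P Q = 0" using Q2_nz Q5_nz by simp
  have "Q 2^2 * Q 5^2 * S Q Q = 0"
    unfolding scaled q0 q7 unfolding expand by algebra
  then show "S Q Q = 0" using Q2_nz Q5_nz by simp
qed

lemma somos7_of_vieta:
  fixes p q :: "nat \<Rightarrow> real" and a1 a2 a3 I a5 a6 :: real
  defines "S \<equiv> somos7_defect (qrt_alpha a1 a2 a3 I a5 a6) (qrt_beta a1 a2 a3 I a5 a6) (qrt_gamma a3 I)"
  assumes V: "\<And>k. k < 6 \<Longrightarrow> qrt_vieta a1 a2 a3 I a5 a6 p q k"
    and nz: "q 2 \<noteq> 0" "q 3 \<noteq> 0" "q 4 \<noteq> 0" "q 5 \<noteq> 0"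
  shows "S p p = 0" "S q q = 0"
proof -
  \<comment> \<open>The gauge c r^k agrees with q at 3 and 4, and t moves the root p 3 / q 3 to 0.\<close>
  define r where "r = q 4 / q 3"
  define c where "c = q 3 / r^3"
  define t where "t = p 3 / q 3"
  define Q where "Q k = q k / (c * r^k)" for k
  define P where "P k = p k / (c * r^k) - t * Q k" for k
  have r: "r \<noteq> 0" and c: "c \<noteq> 0"
    using nz by (simp_all add: r_def c_def)
  have q: "q = (\<lambda>k. c * r^k * Q k)" and p: "p = (\<lambda>k. c * r^k * (P k + t * Q k))"
    using r c by (simp_all add: fun_eq_iff P_def Q_def)
  have V': "qrt_vieta a1 (a2 + 2*t*a1) (a1*t^2 + a2*t + a3) (I - 4*t*a2 - 4*t^2*a1)
          (2*a1*t^3 + 3*a2*t^2 + (2*a3 - I)*t + a5)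
          (a1*t^4 + 2*a2*t^3 + (2*a3 - I)*t^2 + 2*a5*t + a6) P Q k" if "k < 6" for k
    using qrt_vieta_gauge[OF V[OF that, unfolded p q] c r] by (rule qrt_vieta_translate)
  have cr3: "c * r^3 = q 3" and cr4: "c * r^4 = q 4"
    using r nz by (simp_all add: c_def r_def numeral_eq_Suc)
  have norm: "P 3 = 0" "Q 3 = 1" "Q 4 = 1" "Q 2 \<noteq> 0" "Q 5 \<noteq> 0"
    using r c nz by (simp_all add: P_def Q_def t_def cr3 cr4)
  have "S P P = 0" "S P Q = 0" "S Q Q = 0"
    using somos7_of_vieta_normalized[OF V' norm] by (simp_all add: S_def qrt_invariants_translate)
  then show "S p p = 0" "S q q = 0"
    unfolding p q S_def somos7_defect_geometric somos7_defect_add_left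
      somos7_defect_add_right
    by (simp_all add: somos7_defect_commute[of _ _ _ Q P])
qed

lemma qrt_invariants_eq:
  "qrt_alpha (qa1 A B J) (qa2 A B J) (qa3 A B J) (qI A B J) (qa5 A B J) (qa6 A B J) = qalpha A B J"
  "qrt_beta (qa1 A B J) (qa2 A B J) (qa3 A B J) (qI A B J) (qa5 A B J) (qa6 A B J) = qbeta A B J"
  "qrt_gamma (qa3 A B J) (qI A B J) = qgamma A B J"
  by (simp_all add: qrt_alpha_def qalpha_def qrt_beta_def qbeta_def qrt_gamma_def qgamma_def)

lemma somos7_defect_diag:
  "somos7_defect (qalpha A B J) (qbeta A B J) (qgamma A B J) x x = 0 \<longleftrightarrow>
     x 7 * x 0 = cA A B J * x 6 * x 1 + cB A B J * x 5 * x 2 + cC A B J * x 4 * x 3"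
proof -
  have defect: "somos7_defect (qalpha A B J) (qbeta A B J) (qgamma A B J) x x
      = 2 * (x 7 * x 0 - (cA A B J * x 6 * x 1 + cB A B J * x 5 * x 2 + cC A B J * x 4 * x 3))"
    by (simp add: somos7_defect_def Let_def cA_def cB_def cC_def algebra_simps)
  show ?thesis unfolding defect mult_eq_0_iff right_minus_eq by simp
qed

theorem corollary3:
  fixes A B :: "real^3^3" and p q :: "nat \<Rightarrow> real" and J :: real
  assumes symA: "transpose A = A" and symB: "transpose B = B"
    and q_nz: "\<forall>n. q n \<noteq> 0"
    and D_nz: "\<forall>n. bq B (p n) (q n) (p (n+1)) (q (n+1)) \<noteq> 0"
    and rec_p: "\<forall>n. p (n+2) =
        (q n * Fq A B (p (n+1)) (q (n+1)) $ 1 - p n * Fq A B (p (n+1)) (q (n+1)) $ 2)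
        / bq B (p n) (q n) (p (n+1)) (q (n+1))"
    and rec_q: "\<forall>n. q (n+2) =
        (q n * Fq A B (p (n+1)) (q (n+1)) $ 2 - p n * Fq A B (p (n+1)) (q (n+1)) $ 3)
        / bq B (p n) (q n) (p (n+1)) (q (n+1))"
    and J_def: "J = bq A (p 0) (q 0) (p 1) (q 1) / bq B (p 0) (q 0) (p 1) (q 1)"
  shows "(\<forall>n. p (n+7) * p n = cA A B J * p (n+6) * p (n+1) + cB A B J * p (n+5) * p (n+2)
                              + cC A B J * p (n+4) * p (n+3)) \<and>
         (\<forall>n. q (n+7) * q n = cA A B J * q (n+6) * q (n+1) + cB A B J * q (n+5) * q (n+2)
                              + cC A B J * q (n+4) * q (n+3))"
proof -
  note step = qrt_step[OF symA symB q_nz[rule_format] D_nz[rule_format] rec_p[rule_format]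
      rec_q[rule_format], simplified add.assoc numeral_plus_one]
  have J_inv: "bq A (p n) (q n) (p (n+1)) (q (n+1)) = J * bq B (p n) (q n) (p (n+1)) (q (n+1))" for n
  proof (induction n)
    case 0
    show ?case using D_nz by (simp add: J_def)
  next
    case (Suc n)
    then show ?case using step(4) by simp
  qed
  have V: "qrt_vieta (qa1 A B J) (qa2 A B J) (qa3 A B J) (qI A B J) (qa5 A B J) (qa6 A B J) p q n" for n
    using step(1-3)[OF J_inv] by (simp add: qrt_vieta_def add.assoc)
  have "somos7_defect (qalpha A B J) (qbeta A B J) (qgamma A B J) (\<lambda>k. p (n+k)) (\<lambda>k. p (n+k)) = 0
      \<and> somos7_defect (qalpha A B J) (qbeta A B J) (qgamma A B J) (\<lambda>k. q (n+k)) (\<lambda>k. q (n+k)) = 0"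
    for n
  proof -
    have "k < 6 \<Longrightarrow> qrt_vieta (qa1 A B J) (qa2 A B J) (qa3 A B J) (qI A B J) (qa5 A B J) (qa6 A B J)
        (\<lambda>k. p (n+k)) (\<lambda>k. q (n+k)) k" for k
      using V by (simp add: qrt_vieta_shift)
    from somos7_of_vieta[OF this] q_nz show ?thesis
      by (simp add: qrt_invariants_eq)
  qed
  then show ?thesis
    unfolding somos7_defect_diag by simp
qed

end
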